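(* Let $\mathbf{A}\in\mathbb{R}^{n\times n}$ be positive semidefinite and let $\mathbf{u}\in\mathbb{R}^n$ satisfy $\mathbf{u}\not\perp\mathrm{Ker}(\mathbf{A})$. Then $\mathrm{Det}(\mathbf{A}+\mathbf{u}\mathbf{u}^\top)\ge\lambda_{\min}(\mathbf{A}+\mathbf{u}\mathbf{u}^\top)\,\mathrm{Det}(\mathbf{A})$.
   Context: $\mathrm{Det}(\mathbf{M})$ is the product of the nonzero eigenvalues of $\mathbf{M}$ (with $\mathrm{Det}(\mathbf{O})=1$). $\lambda_{\min}(\mathbf{M})$ denotes the smallest nonzero eigenvalue of $\mathbf{M}$. $\mathbf{u}\not\perp\mathrm{Ker}(\mathbf{A})$ means there is $\mathbf{y}\in\mathrm{Ker}(\mathbf{A})$ with $\mathbf{u}^\top\mathbf{y}\ne0$. *)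

theory Defs
  imports "Jordan_Normal_Form.Matrix_Kernel" "Jordan_Normal_Form.Char_Poly"
begin

definition psd_mat :: "nat \<Rightarrow> real mat \<Rightarrow> bool" where
  "psd_mat n A \<longleftrightarrow> A \<in> carrier_mat n n \<and> A\<^sup>T = A \<and>
     (\<forall>v \<in> carrier_vec n. 0 \<le> v \<bullet> (A *\<^sub>v v))"

definition outer_prod :: "real vec \<Rightarrow> real mat" where
  "outer_prod u = mat (dim_vec u) (dim_vec u) (\<lambda>(i,j). u $ i * u $ j)"

(* pseudo-determinant: product of the nonzero eigenvalues, counted with
   algebraic multiplicity (roots of the characteristic polynomial);
   equals 1 for the zero matrix *)
definition pdet :: "real mat \<Rightarrow> real" where
  "pdet A = prod_mset (filter_mset (\<lambda>x. x \<noteq> 0) (proots (char_poly A)))"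

definition lambda_min_nz :: "real mat \<Rightarrow> real" where
  "lambda_min_nz A = Min {x. eigenvalue A x \<and> x \<noteq> 0}"

end

theory Submission
  imports Defs
begin

(* Diagonalise A = Q D Q^T with Q orthogonal and put w = Q^T u. Both sides of the inequality
   depend only on characteristic polynomials, so A and u may be replaced by D and w. The
   characteristic polynomial of D + w w^T is the secular polynomial
     prod_i (X - d_i) - sum_i w_i^2 prod_{j <> i} (X - d_j).
   If m of the d_i vanish, it equals X^(m-1) h with h(0) = - c prod_{d_j <> 0} (- d_j), where
   c = sum_{d_i = 0} w_i^2, and c > 0 because u is not orthogonal to Ker A. Hence
   Det (D + w w^T) = c Det D. The component of w in Ker D is orthogonal to Ker (D + w w^T) and
   has Rayleigh quotient c, so the smallest nonzero eigenvalue of D + w w^T is at most c. *)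

lemma col_eq_mult_unit_vec:
  fixes A :: "'a :: semiring_1 mat"
  assumes "A \<in> carrier_mat n m" "j < m"
  shows "col A j = A *\<^sub>v unit_vec m j"
  using assms by (intro eq_vecI) auto

lemma eq_matI_mult_vec:
  fixes A B :: "'a :: semiring_1 mat"
  assumes A: "A \<in> carrier_mat n m" and B: "B \<in> carrier_mat n m"
    and eq: "\<And>x. x \<in> carrier_vec m \<Longrightarrow> A *\<^sub>v x = B *\<^sub>v x"
  shows "A = B"
proof (rule mat_col_eqI)
  fix j assume "j < dim_col B"
  with B have j: "j < m" by simp
  show "col A j = col B j"
    using col_eq_mult_unit_vec[OF A j] col_eq_mult_unit_vec[OF B j] eq[of "unit_vec m j"] by simp
qed (use A B in auto)

lemma smult_mat_mult_vec:
  assumes "A \<in> carrier_mat n m" "x \<in> carrier_vec m"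
  shows "(k \<cdot>\<^sub>m A) *\<^sub>v x = k \<cdot>\<^sub>v (A *\<^sub>v x)"
  using assms by (intro eq_vecI) (auto simp: scalar_prod_def sum_distrib_left mult_ac)

lemma scalar_prod_self_nonneg: "0 \<le> (v :: real vec) \<bullet> v"
  using conjugate_square_ge_0_vec[of v] by simp

lemma scalar_prod_self_eq_0_iff:
  assumes "(v :: real vec) \<in> carrier_vec n"
  shows "v \<bullet> v = 0 \<longleftrightarrow> v = 0\<^sub>v n"
  using conjugate_square_eq_0_vec[OF assms] by simp

lemma transpose_congruence:
  fixes Q M :: "'a :: comm_semiring_0 mat"
  assumes Q: "Q \<in> carrier_mat n m" and M: "M \<in> carrier_mat n n"
  shows "(Q\<^sup>T * M * Q)\<^sup>T = Q\<^sup>T * M\<^sup>T * Q"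
proof -
  have "(Q\<^sup>T * M * Q)\<^sup>T = Q\<^sup>T * (Q\<^sup>T * M)\<^sup>T"
    by (rule transpose_mult) (use Q M in auto)
  also have "(Q\<^sup>T * M)\<^sup>T = M\<^sup>T * Q"
    using transpose_mult[of "Q\<^sup>T" m n M n] Q M by simp
  finally show ?thesis using Q M by (simp add: assoc_mult_mat[of _ m n _ n _ m])
qed

lemma congruence_mult:
  fixes P Q M :: "'a :: comm_semiring_0 mat"
  assumes "P \<in> carrier_mat n n" "Q \<in> carrier_mat n n" "M \<in> carrier_mat n n"
  shows "(P * Q)\<^sup>T * M * (P * Q) = Q\<^sup>T * (P\<^sup>T * M * P) * Q"
  unfolding transpose_mult[OF assms(1,2)]
  using assms by (simp add: assoc_mult_mat[of _ n n _ n _ n])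

lemma outer_prod_carrier [simp]: "u \<in> carrier_vec n \<Longrightarrow> outer_prod u \<in> carrier_mat n n"
  by (auto simp: outer_prod_def)

lemma dim_outer_prod [simp]:
  "dim_row (outer_prod u) = dim_vec u" "dim_col (outer_prod u) = dim_vec u"
  by (auto simp: outer_prod_def)

lemma index_outer_prod [simp]:
  "i < dim_vec u \<Longrightarrow> j < dim_vec u \<Longrightarrow> outer_prod u $$ (i,j) = u $ i * u $ j"
  by (auto simp: outer_prod_def)

lemma transpose_outer_prod [simp]: "(outer_prod u)\<^sup>T = outer_prod u"
  by (rule eq_matI) auto

lemma outer_prod_mult_vec:
  fixes u x :: "real vec"
  assumes "u \<in> carrier_vec n" "x \<in> carrier_vec n"
  shows "outer_prod u *\<^sub>v x = (u \<bullet> x) \<cdot>\<^sub>v u"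
  using assms by (intro eq_vecI) (auto simp: scalar_prod_def sum_distrib_left mult_ac)

lemma congruence_outer_prod:
  fixes P :: "real mat"
  assumes P: "P \<in> carrier_mat n m" and u: "u \<in> carrier_vec n"
  shows "P\<^sup>T * outer_prod u * P = outer_prod (P\<^sup>T *\<^sub>v u)"
proof (rule eq_matI)
  fix i j assume "i < dim_row (outer_prod (P\<^sup>T *\<^sub>v u))" "j < dim_col (outer_prod (P\<^sup>T *\<^sub>v u))"
  with P have i: "i < m" and j: "j < m" by auto
  have "(P\<^sup>T * outer_prod u * P) $$ (i,j) = (\<Sum>l<n. (\<Sum>k<n. P $$ (k,i) * (u $ k * u $ l)) * P $$ (l,j))"
    using P u i j by (simp add: scalar_prod_def lessThan_atLeast0)
  also have "\<dots> = (\<Sum>k<n. P $$ (k,i) * u $ k) * (\<Sum>l<n. P $$ (l,j) * u $ l)"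
    by (simp add: sum_distrib_left sum_distrib_right mult_ac)
  also have "\<dots> = outer_prod (P\<^sup>T *\<^sub>v u) $$ (i,j)"
    using P u i j by (simp add: scalar_prod_def lessThan_atLeast0)
  finally show "(P\<^sup>T * outer_prod u * P) $$ (i,j) = outer_prod (P\<^sup>T *\<^sub>v u) $$ (i,j)" .
qed (use P u in auto)

lemma congruence_one_minus_outer_prod:
  fixes P :: "real mat"
  assumes P: "P \<in> carrier_mat n n" and z: "z \<in> carrier_vec n"
  shows "P\<^sup>T * (1\<^sub>m n - outer_prod z) * P = P\<^sup>T * P - outer_prod (P\<^sup>T *\<^sub>v z)"
  using congruence_outer_prod[OF P z] P z
  by (simp add: mult_minus_distrib_mat[of _ n n _ n] minus_mult_distrib_mat[of _ n n _ _ n])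

lemma congruence_plus_outer_prod:
  fixes P A :: "real mat"
  assumes P: "P \<in> carrier_mat n n" and A: "A \<in> carrier_mat n n" and u: "u \<in> carrier_vec n"
  shows "P\<^sup>T * (A + outer_prod u) * P = P\<^sup>T * A * P + outer_prod (P\<^sup>T *\<^sub>v u)"
  using congruence_outer_prod[OF P u] P A u
  by (simp add: mult_add_distrib_mat[of _ n n _ n] add_mult_distrib_mat[of _ n n _ _ n])

(* Stronger than orthogonal_mat from the library, which only asks for pairwise orthogonal columns. *)
definition orthonormal_mat :: "nat \<Rightarrow> real mat \<Rightarrow> bool" where
  "orthonormal_mat n Q \<longleftrightarrow> Q \<in> carrier_mat n n \<and> Q\<^sup>T * Q = 1\<^sub>m n \<and> Q * Q\<^sup>T = 1\<^sub>m n"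

lemma orthonormal_matD:
  assumes "orthonormal_mat n Q"
  shows "Q \<in> carrier_mat n n" "Q\<^sup>T \<in> carrier_mat n n" "Q\<^sup>T * Q = 1\<^sub>m n" "Q * Q\<^sup>T = 1\<^sub>m n"
  using assms by (auto simp: orthonormal_mat_def)

lemma orthonormal_mat_one: "orthonormal_mat n (1\<^sub>m n)"
  by (simp add: orthonormal_mat_def)

lemma orthonormal_mat_cancel:
  assumes "orthonormal_mat n Q" "A \<in> carrier_mat n m"
  shows "Q * (Q\<^sup>T * A) = A" "Q\<^sup>T * (Q * A) = A"
  using orthonormal_matD[OF assms(1)] assms(2)
  by (simp_all add: assoc_mult_mat[symmetric, of _ n n _ n _ m])

lemma orthonormal_mat_mult:
  assumes P: "orthonormal_mat n P" and Q: "orthonormal_mat n Q"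
  shows "orthonormal_mat n (P * Q)"
proof -
  note P' = orthonormal_matD[OF P] and Q' = orthonormal_matD[OF Q]
  have T: "(P * Q)\<^sup>T = Q\<^sup>T * P\<^sup>T" using P'(1) Q'(1) by (rule transpose_mult)
  have "(P * Q)\<^sup>T * (P * Q) = Q\<^sup>T * (P\<^sup>T * (P * Q))"
    unfolding T using P' Q' by (simp add: assoc_mult_mat[of _ n n _ n _ n])
  moreover have "(P * Q) * (P * Q)\<^sup>T = P * (Q * (Q\<^sup>T * P\<^sup>T))"
    unfolding T using P' Q' by (simp add: assoc_mult_mat[of _ n n _ n _ n])
  ultimately show ?thesis
    using P' Q' orthonormal_mat_cancel[OF P] orthonormal_mat_cancel[OF Q]
    by (simp add: orthonormal_mat_def)
qed

lemma orthonormal_mat_cancel_vec: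
  assumes "orthonormal_mat n Q" "x \<in> carrier_vec n"
  shows "Q *\<^sub>v (Q\<^sup>T *\<^sub>v x) = x" "Q\<^sup>T *\<^sub>v (Q *\<^sub>v x) = x"
  using orthonormal_matD[OF assms(1)] assms(2)
  by (simp_all add: assoc_mult_mat_vec[symmetric, of _ n n _ n])

lemma orthonormal_mat_scalar_prod:
  assumes Q: "orthonormal_mat n Q" and x: "x \<in> carrier_vec n" and y: "y \<in> carrier_vec n"
  shows "(Q\<^sup>T *\<^sub>v x) \<bullet> (Q\<^sup>T *\<^sub>v y) = x \<bullet> y"
  using transpose_vec_mult_scalar[OF orthonormal_matD(1)[OF Q] _ x, of "Q\<^sup>T *\<^sub>v y"]
    orthonormal_mat_cancel_vec[OF Q y] orthonormal_matD[OF Q] y by simp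

lemma orthonormal_mat_quadratic_form:
  assumes Q: "orthonormal_mat n Q" and M: "M \<in> carrier_mat n n"
    and x: "x \<in> carrier_vec n"
  shows "x \<bullet> (M *\<^sub>v x) = (Q\<^sup>T *\<^sub>v x) \<bullet> ((Q\<^sup>T * M * Q) *\<^sub>v (Q\<^sup>T *\<^sub>v x))"
proof -
  note Q' = orthonormal_matD[OF Q]
  have "(Q\<^sup>T * M * Q) *\<^sub>v (Q\<^sup>T *\<^sub>v x) = Q\<^sup>T *\<^sub>v (M *\<^sub>v x)"
    using Q' M x orthonormal_mat_cancel_vec(1)[OF Q x]
    by (simp add: assoc_mult_mat_vec[of _ n n _ n])
  then show ?thesis
    using orthonormal_mat_scalar_prod[OF Q x, of "M *\<^sub>v x"] M x by simp
qed

lemma orthonormal_congruence_mult_vec_eq_0: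
  assumes Q: "orthonormal_mat n Q" and M: "M \<in> carrier_mat n n" and y: "y \<in> carrier_vec n"
  shows "(Q\<^sup>T * M * Q) *\<^sub>v y = 0\<^sub>v n \<longleftrightarrow> M *\<^sub>v (Q *\<^sub>v y) = 0\<^sub>v n"
proof -
  note Q' = orthonormal_matD[OF Q]
  have eq: "(Q\<^sup>T * M * Q) *\<^sub>v y = Q\<^sup>T *\<^sub>v (M *\<^sub>v (Q *\<^sub>v y))"
    using Q' M y by (simp add: assoc_mult_mat_vec[of _ n n _ n])
  show ?thesis
  proof
    assume "(Q\<^sup>T * M * Q) *\<^sub>v y = 0\<^sub>v n"
    then have "Q *\<^sub>v (Q\<^sup>T *\<^sub>v (M *\<^sub>v (Q *\<^sub>v y))) = Q *\<^sub>v 0\<^sub>v n" by (simp add: eq)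
    moreover have "Q *\<^sub>v 0\<^sub>v n = 0\<^sub>v n" using Q' by auto
    ultimately show "M *\<^sub>v (Q *\<^sub>v y) = 0\<^sub>v n"
      using orthonormal_mat_cancel_vec(1)[OF Q, of "M *\<^sub>v (Q *\<^sub>v y)"] Q' M y by simp
  qed (use eq Q' in auto)
qed

lemma orthonormal_congruence_kernel:
  assumes Q: "orthonormal_mat n Q" and M: "M \<in> carrier_mat n n" and y: "y \<in> mat_kernel M"
  shows "Q\<^sup>T *\<^sub>v y \<in> mat_kernel (Q\<^sup>T * M * Q)"
proof -
  note Q' = orthonormal_matD[OF Q] and y' = mat_kernelD[OF M y]
  have "Q\<^sup>T *\<^sub>v y \<in> carrier_vec n" using Q' y' by simp
  moreover have "M *\<^sub>v (Q *\<^sub>v (Q\<^sup>T *\<^sub>v y)) = 0\<^sub>v n"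
    using orthonormal_mat_cancel_vec(1)[OF Q y'(1)] y'(2) by simp
  ultimately show ?thesis
    using orthonormal_congruence_mult_vec_eq_0[OF Q M] Q' M by (auto intro: mat_kernelI)
qed

lemma char_poly_orthonormal_congruence:
  assumes Q: "orthonormal_mat n Q" and M: "M \<in> carrier_mat n n"
  shows "char_poly (Q\<^sup>T * M * Q) = char_poly M"
proof (rule char_poly_similar)
  note Q' = orthonormal_matD[OF Q]
  have "M = Q * (Q\<^sup>T * M * Q) * Q\<^sup>T"
    using Q' M orthonormal_mat_cancel[OF Q M] by (simp add: assoc_mult_mat[of _ n n _ n _ n])
  then show "similar_mat (Q\<^sup>T * M * Q) M"
    unfolding similar_mat_def similar_mat_wit_def using Q' M
    by (intro exI[of _ "Q\<^sup>T"] exI[of _ Q]) (auto simp: Let_def)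
qed

lemma det_orthonormal_congruence:
  assumes Q: "orthonormal_mat n Q" and M: "M \<in> carrier_mat n n"
  shows "det (Q\<^sup>T * M * Q) = det M"
proof -
  note Q' = orthonormal_matD[OF Q]
  have "det (Q\<^sup>T * M * Q) = det M * (det Q\<^sup>T * det Q)"
    using Q' M by (simp add: det_mult[of _ n])
  also have "det Q\<^sup>T * det Q = 1"
    using det_mult[OF Q'(2,1)] Q'(3) by simp
  finally show ?thesis by simp
qed

section \<open>Householder reflections\<close>

(* For h = 0 the coefficient is 2 / 0 = 0 and the reflection degenerates to the identity,
   so no hypothesis on h is needed below. *)
definition householder_mat :: "real vec \<Rightarrow> real mat" where
  "householder_mat h = 1\<^sub>m (dim_vec h) - (2 / (h \<bullet> h)) \<cdot>\<^sub>m outer_prod h"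

lemma householder_mat_carrier: "h \<in> carrier_vec n \<Longrightarrow> householder_mat h \<in> carrier_mat n n"
  by (auto simp: householder_mat_def)

lemma transpose_householder_mat: "(householder_mat h)\<^sup>T = householder_mat h"
  by (rule eq_matI) (auto simp: householder_mat_def)

lemma householder_mat_mult_vec:
  assumes "h \<in> carrier_vec n" "x \<in> carrier_vec n"
  shows "householder_mat h *\<^sub>v x = x - (2 * (h \<bullet> x) / (h \<bullet> h)) \<cdot>\<^sub>v h"
  using assms unfolding householder_mat_def
  by (subst minus_mult_distrib_mat_vec[of _ n n])
     (auto simp: smult_mat_mult_vec[of _ n n] outer_prod_mult_vec smult_smult_assoc)

lemma householder_mat_involution:
  assumes h: "h \<in> carrier_vec n"
  shows "householder_mat h * householder_mat h = 1\<^sub>m n"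
proof (rule eq_matI_mult_vec)
  fix x :: "real vec" assume x: "x \<in> carrier_vec n"
  define c where "c = 2 * (h \<bullet> x) / (h \<bullet> h)"
  have "2 * (h \<bullet> (x - c \<cdot>\<^sub>v h)) / (h \<bullet> h) = - c"
    using h x by (cases "h \<bullet> h = 0") (auto simp: c_def scalar_prod_minus_distrib field_simps)
  then show "(householder_mat h * householder_mat h) *\<^sub>v x = 1\<^sub>m n *\<^sub>v x"
    using h x householder_mat_carrier[OF h]
    by (auto simp: householder_mat_mult_vec c_def[symmetric])
qed (use householder_mat_carrier[OF h] in auto)

lemma orthonormal_mat_householder_mat:
  assumes "h \<in> carrier_vec n"
  shows "orthonormal_mat n (householder_mat h)"
  using assms householder_mat_carrier householder_mat_involution
  by (simp add: orthonormal_mat_def transpose_householder_mat)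

lemma householder_mat_to_axis:
  assumes z: "z \<in> carrier_vec n" and n: "0 < n"
  defines "s \<equiv> sqrt (z \<bullet> z)"
  shows "householder_mat (z - s \<cdot>\<^sub>v unit_vec n 0) *\<^sub>v z = s \<cdot>\<^sub>v unit_vec n 0"
proof -
  define h where "h = z - s \<cdot>\<^sub>v unit_vec n 0"
  have h: "h \<in> carrier_vec n" using z by (simp add: h_def)
  have ss: "s * s = z \<bullet> z" using scalar_prod_self_nonneg[of z] by (simp add: s_def)
  have hz: "h \<bullet> z = z \<bullet> z - s * z $ 0"
    unfolding h_def using z n by (simp add: minus_scalar_prod_distrib[of _ n])
  have "h \<bullet> h = h \<bullet> z - h \<bullet> (s \<cdot>\<^sub>v unit_vec n 0)"
    using scalar_prod_minus_distrib[OF h z, of "s \<cdot>\<^sub>v unit_vec n 0", folded h_def] by simp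
  also have "h \<bullet> (s \<cdot>\<^sub>v unit_vec n 0) = s * (z $ 0 - s)"
    using h z n by (simp add: h_def)
  finally have hh: "h \<bullet> h = 2 * (h \<bullet> z)"
    using hz ss by (simp add: algebra_simps)
  have "(2 * (h \<bullet> z) / (h \<bullet> h)) \<cdot>\<^sub>v h = h"
  proof (cases "h \<bullet> h = 0")
    case True
    then show ?thesis using scalar_prod_self_eq_0_iff[OF h] h by auto
  qed (simp add: hh)
  then have "householder_mat h *\<^sub>v z = z - h"
    using householder_mat_mult_vec[OF h z] by simp
  also have "\<dots> = s \<cdot>\<^sub>v unit_vec n 0"
    using z by (auto simp: h_def)
  finally show ?thesis unfolding h_def .
qed

lemma orthonormal_mat_to_axis:
  assumes z: "z \<in> carrier_vec n" and n: "0 < n"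
  shows "\<exists>H. orthonormal_mat n H \<and> H\<^sup>T *\<^sub>v z = sqrt (z \<bullet> z) \<cdot>\<^sub>v unit_vec n 0"
proof -
  let ?h = "z - sqrt (z \<bullet> z) \<cdot>\<^sub>v unit_vec n 0"
  have "?h \<in> carrier_vec n" using z by simp
  then show ?thesis
    using householder_mat_to_axis[OF z n] orthonormal_mat_householder_mat
    by (intro exI[of _ "householder_mat ?h"]) (simp add: transpose_householder_mat)
qed

lemma diagonal_mat_mult_vec:
  assumes D: "D \<in> carrier_mat n n" "diagonal_mat D" and v: "v \<in> carrier_vec n" and i: "i < n"
  shows "(D *\<^sub>v v) $ i = D $$ (i,i) * v $ i"
proof -
  have "(D *\<^sub>v v) $ i = (\<Sum>k\<in>{0..<n}. D $$ (i,k) * v $ k)"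
    using D v i by (simp add: scalar_prod_def)
  also have "\<dots> = (\<Sum>k\<in>{0..<n}. if k = i then D $$ (i,i) * v $ i else 0)"
    by (rule sum.cong) (use D i in \<open>auto simp: diagonal_mat_def\<close>)
  finally show ?thesis using i by simp
qed

lemma diagonal_mat_mult_unit_vec_eq_0:
  assumes D: "D \<in> carrier_mat n n" "diagonal_mat D" and k: "k < n" "D $$ (k,k) = 0"
  shows "D *\<^sub>v unit_vec n k = 0\<^sub>v n"
proof (rule eq_vecI)
  fix i assume "i < dim_vec (0\<^sub>v n)"
  then have i: "i < n" by simp
  show "(D *\<^sub>v unit_vec n k) $ i = 0\<^sub>v n $ i"
    unfolding diagonal_mat_mult_vec[OF D unit_vec_carrier i] using k i by simp
qed (use D in simp)

lemma diagonal_mat_quadratic_form: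
  fixes D :: "real mat"
  assumes D: "D \<in> carrier_mat n n" "diagonal_mat D" and x: "x \<in> carrier_vec n"
  shows "x \<bullet> (D *\<^sub>v x) = (\<Sum>i<n. D $$ (i,i) * (x $ i)\<^sup>2)"
  using x diagonal_mat_mult_vec[OF D x] D
  by (auto simp: scalar_prod_def lessThan_atLeast0 power2_eq_square mult_ac intro!: sum.cong)

lemma transpose_diagonal_mat:
  assumes "D \<in> carrier_mat n n" "diagonal_mat D"
  shows "D\<^sup>T = D"
  using assms unfolding diagonal_mat_def by (intro eq_matI) (metis carrier_matD index_transpose_mat)+

lemma det_diagonal_mat:
  assumes "D \<in> carrier_mat n n" "diagonal_mat D"
  shows "det D = (\<Prod>i<n. D $$ (i,i))"
proof -
  have "upper_triangular D" using assms unfolding diagonal_mat_def upper_triangular_def by auto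
  then show ?thesis
    using det_upper_triangular[of D n] assms(1)
    by (simp add: diag_mat_def prod.distinct_set_conv_list[symmetric] lessThan_atLeast0)
qed

lemma char_poly_diagonal_mat:
  assumes D: "D \<in> carrier_mat n n" "diagonal_mat D"
  shows "char_poly D = (\<Prod>i<n. [:- D $$ (i,i), 1:])"
proof -
  have "upper_triangular D" using D unfolding diagonal_mat_def upper_triangular_def by auto
  then have "char_poly D = (\<Prod>i\<leftarrow>[0..<n]. [:- D $$ (i,i), 1:])"
    using char_poly_upper_triangular[OF D(1)] D(1) by (simp add: diag_mat_def o_def)
  then show ?thesis by (simp add: prod.distinct_set_conv_list[symmetric] lessThan_atLeast0)
qed

lemma eigenvalue_diagonal_mat_iff:
  fixes D :: "'a :: field mat"
  assumes D: "D \<in> carrier_mat n n" "diagonal_mat D"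
  shows "eigenvalue D x \<longleftrightarrow> (\<exists>i<n. D $$ (i,i) = x)"
  unfolding eigenvalue_root_char_poly[OF D(1)] char_poly_diagonal_mat[OF D] poly_prod
  by (auto simp: prod_zero_iff)

section \<open>Spectral theorem for real symmetric matrices\<close>

lemma symmetric_complex_eigenvalue_real:
  fixes M :: "real mat"
  assumes M: "M \<in> carrier_mat n n" "M\<^sup>T = M"
    and z: "eigenvalue (map_mat complex_of_real M) z"
  shows "z \<in> \<real>"
proof -
  let ?C = "map_mat complex_of_real M"
  have C: "?C \<in> carrier_mat n n" "?C\<^sup>T = ?C"
    using M by (auto simp: map_mat_transpose)
  obtain v where v: "v \<in> carrier_vec n" "v \<noteq> 0\<^sub>v n" and Cv: "?C *\<^sub>v v = z \<cdot>\<^sub>v v"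
    using z C(1) unfolding eigenvalue_def eigenvector_def by auto
  have conj_Cv: "conjugate (?C *\<^sub>v v) = ?C *\<^sub>v conjugate v"
    using M v by (intro eq_vecI) (auto simp: scalar_prod_def sum_conjugate conjugate_dist_mul)
  have "z * (v \<bullet>c v) = (?C *\<^sub>v v) \<bullet> conjugate v"
    using v by (simp add: Cv)
  also have "\<dots> = v \<bullet> (?C *\<^sub>v conjugate v)"
    using transpose_vec_mult_scalar[OF C(1), of "conjugate v" v] v C(2) by simp
  also have "\<dots> = cnj z * (v \<bullet>c v)"
    using v unfolding conj_Cv[symmetric] Cv by (simp add: conjugate_smult_vec)
  finally have "z = cnj z"
    using conjugate_square_eq_0_vec[OF v(1)] v(2) by simp
  then show ?thesis by (simp add: Reals_cnj_iff)
qed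

lemma symmetric_real_mat_has_eigenvector:
  fixes M :: "real mat"
  assumes M: "M \<in> carrier_mat n n" "M\<^sup>T = M" and n: "0 < n"
  shows "\<exists>r v. eigenvector M v r"
proof -
  let ?C = "map_mat complex_of_real M"
  have cp: "char_poly ?C = map_poly complex_of_real (char_poly M)"
    using of_real_hom.char_poly_hom[OF M(1)] .
  have "degree (char_poly ?C) = n"
    using degree_monic_char_poly[of ?C n] M(1) by simp
  then have "\<not> constant (poly (char_poly ?C))"
    using n by (simp add: constant_degree)
  then obtain z where "poly (char_poly ?C) z = 0"
    using fundamental_theorem_of_algebra by blast
  then have z: "eigenvalue ?C z"
    using eigenvalue_root_char_poly[of ?C n] M(1) by simp
  then obtain r where r: "z = complex_of_real r"
    using symmetric_complex_eigenvalue_real[OF M] Reals_cases by metis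
  have "poly (char_poly M) r = 0"
    using \<open>poly (char_poly ?C) z = 0\<close> unfolding cp r by simp
  then show ?thesis
    using eigenvalue_root_char_poly[OF M(1)] unfolding eigenvalue_def by blast
qed

lemma symmetric_mat_eigenvector_first_unit:
  fixes M :: "real mat"
  assumes M: "M \<in> carrier_mat (Suc n) (Suc n)" "M\<^sup>T = M"
    and ev: "M *\<^sub>v unit_vec (Suc n) 0 = r \<cdot>\<^sub>v unit_vec (Suc n) 0"
  shows "M = four_block_mat (mat 1 1 (\<lambda>_. r)) (0\<^sub>m 1 n) (0\<^sub>m n 1)
                (mat n n (\<lambda>(i,j). M $$ (Suc i, Suc j)))"
proof -
  have col0: "M $$ (i,0) = (if i = 0 then r else 0)" if "i < Suc n" for i
  proof -
    have "M $$ (i,0) = (M *\<^sub>v unit_vec (Suc n) 0) $ i"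
      using arg_cong[OF col_eq_mult_unit_vec[OF M(1) zero_less_Suc], of "\<lambda>v. v $ i"] M(1) that
      by simp
    then show ?thesis using that by (simp add: ev)
  qed
  have "M $$ (0,j) = M $$ (j,0)" if "j < Suc n" for j
    using arg_cong[OF M(2), of "\<lambda>A. A $$ (j,0)"] M(1) that by simp
  with col0 show ?thesis
    using M(1) by (intro eq_matI) auto
qed

lemma orthonormal_mat_four_block:
  assumes Q: "orthonormal_mat n Q"
  shows "orthonormal_mat (Suc n) (four_block_mat (1\<^sub>m 1) (0\<^sub>m 1 n) (0\<^sub>m n 1) Q)"
proof -
  note Q' = orthonormal_matD[OF Q]
  have T: "(four_block_mat (1\<^sub>m 1) (0\<^sub>m 1 n) (0\<^sub>m n 1) Q)\<^sup>T
      = four_block_mat (1\<^sub>m 1) (0\<^sub>m 1 n) (0\<^sub>m n 1) Q\<^sup>T"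
    using Q' by (subst transpose_four_block_mat) auto
  show ?thesis
    unfolding orthonormal_mat_def T using Q'
    by (auto simp: mult_four_block_mat[of _ 1 1 _ n _ n _ _ 1 _ n])
qed

lemma congruence_four_block_mat:
  fixes Q A :: "'a :: comm_ring_1 mat"
  assumes Q: "Q \<in> carrier_mat n n" and A: "A \<in> carrier_mat n n"
  defines "B \<equiv> four_block_mat (1\<^sub>m 1) (0\<^sub>m 1 n) (0\<^sub>m n 1) Q"
  shows "B\<^sup>T * four_block_mat (mat 1 1 (\<lambda>_. r)) (0\<^sub>m 1 n) (0\<^sub>m n 1) A * B
       = four_block_mat (mat 1 1 (\<lambda>_. r)) (0\<^sub>m 1 n) (0\<^sub>m n 1) (Q\<^sup>T * A * Q)"
proof -
  have "B\<^sup>T = four_block_mat (1\<^sub>m 1) (0\<^sub>m 1 n) (0\<^sub>m n 1) Q\<^sup>T"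
    unfolding B_def using Q by (subst transpose_four_block_mat) auto
  then show ?thesis
    unfolding B_def using Q A
    by (simp add: mult_four_block_mat[of _ 1 1 _ n _ n _ _ 1 _ n])
qed

lemma symmetric_mat_deflation:
  fixes M :: "real mat"
  assumes M: "M \<in> carrier_mat (Suc n) (Suc n)" "M\<^sup>T = M"
  shows "\<exists>H r A4. orthonormal_mat (Suc n) H \<and> A4 \<in> carrier_mat n n \<and> A4\<^sup>T = A4
    \<and> H\<^sup>T * M * H = four_block_mat (mat 1 1 (\<lambda>_. r)) (0\<^sub>m 1 n) (0\<^sub>m n 1) A4"
proof -
  obtain r v where v: "v \<in> carrier_vec (Suc n)" "v \<noteq> 0\<^sub>v (Suc n)" and Mv: "M *\<^sub>v v = r \<cdot>\<^sub>v v"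
    using symmetric_real_mat_has_eigenvector[OF M] M(1) unfolding eigenvector_def by auto
  obtain H where H: "orthonormal_mat (Suc n) H"
    and Hv: "H\<^sup>T *\<^sub>v v = sqrt (v \<bullet> v) \<cdot>\<^sub>v unit_vec (Suc n) 0"
    using orthonormal_mat_to_axis[OF v(1)] by auto
  note H' = orthonormal_matD[OF H]
  define M' where "M' = H\<^sup>T * M * H"
  have M': "M' \<in> carrier_mat (Suc n) (Suc n)" "M'\<^sup>T = M'"
    using H' M transpose_congruence[OF H'(1) M(1)] by (auto simp: M'_def)
  define s where "s = sqrt (v \<bullet> v)"
  have s: "s \<noteq> 0"
    using scalar_prod_self_eq_0_iff[OF v(1)] scalar_prod_self_nonneg[of v] v(2) by (simp add: s_def)
  have "M' *\<^sub>v (H\<^sup>T *\<^sub>v v) = r \<cdot>\<^sub>v (H\<^sup>T *\<^sub>v v)"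
    using H' M v Mv orthonormal_mat_cancel_vec(1)[OF H v(1)]
    by (simp add: M'_def assoc_mult_mat_vec[of _ "Suc n" "Suc n" _ "Suc n"] mult_mat_vec)
  then have "(1 / s) \<cdot>\<^sub>v (s \<cdot>\<^sub>v (M' *\<^sub>v unit_vec (Suc n) 0))
      = (1 / s) \<cdot>\<^sub>v (s \<cdot>\<^sub>v (r \<cdot>\<^sub>v unit_vec (Suc n) 0))"
    unfolding Hv s_def[symmetric] using M'(1) by (simp add: mult_mat_vec smult_smult_assoc mult.commute)
  then have "M' *\<^sub>v unit_vec (Suc n) 0 = r \<cdot>\<^sub>v unit_vec (Suc n) 0"
    using s by (simp add: smult_smult_assoc)
  then have "M' = four_block_mat (mat 1 1 (\<lambda>_. r)) (0\<^sub>m 1 n) (0\<^sub>m n 1)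
      (mat n n (\<lambda>(i,j). M' $$ (Suc i, Suc j)))"
    by (rule symmetric_mat_eigenvector_first_unit[OF M'])
  moreover have "M' $$ (j,i) = M' $$ (i,j)" if "i < Suc n" "j < Suc n" for i j
    using arg_cong[OF M'(2), of "\<lambda>A. A $$ (i,j)"] M'(1) that by simp
  then have "(mat n n (\<lambda>(i,j). M' $$ (Suc i, Suc j)))\<^sup>T = mat n n (\<lambda>(i,j). M' $$ (Suc i, Suc j))"
    by (auto intro!: eq_matI)
  ultimately show ?thesis
    using H unfolding M'_def by (intro exI[of _ H] exI[of _ r] exI[of _ "mat n n _"]) auto
qed

theorem symmetric_mat_orthonormal_diagonalization:
  fixes M :: "real mat"
  assumes "M \<in> carrier_mat n n" "M\<^sup>T = M"
  shows "\<exists>Q. orthonormal_mat n Q \<and> diagonal_mat (Q\<^sup>T * M * Q)"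
  using assms
proof (induction n arbitrary: M)
  case 0
  then show ?case
    by (intro exI[of _ "1\<^sub>m 0"]) (auto simp: orthonormal_mat_one diagonal_mat_def)
next
  case (Suc n M)
  obtain H r A4 where H: "orthonormal_mat (Suc n) H" and A4: "A4 \<in> carrier_mat n n" "A4\<^sup>T = A4"
    and M': "H\<^sup>T * M * H = four_block_mat (mat 1 1 (\<lambda>_. r)) (0\<^sub>m 1 n) (0\<^sub>m n 1) A4"
    using symmetric_mat_deflation[OF Suc.prems] by blast
  obtain Q4 where Q4: "orthonormal_mat n Q4" and diag4: "diagonal_mat (Q4\<^sup>T * A4 * Q4)"
    using Suc.IH[OF A4] by blast
  define B where "B = four_block_mat (1\<^sub>m 1) (0\<^sub>m 1 n) (0\<^sub>m n 1) Q4"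
  have B: "orthonormal_mat (Suc n) B"
    unfolding B_def by (rule orthonormal_mat_four_block[OF Q4])
  have "(H * B)\<^sup>T * M * (H * B) = B\<^sup>T * (H\<^sup>T * M * H) * B"
    using congruence_mult[OF orthonormal_matD(1)[OF H] orthonormal_matD(1)[OF B] Suc.prems(1)] .
  also have "\<dots> = four_block_mat (mat 1 1 (\<lambda>_. r)) (0\<^sub>m 1 n) (0\<^sub>m n 1) (Q4\<^sup>T * A4 * Q4)"
    unfolding M' B_def by (rule congruence_four_block_mat[OF orthonormal_matD(1)[OF Q4] A4(1)])
  finally have "diagonal_mat ((H * B)\<^sup>T * M * (H * B))"
    using diag4 orthonormal_matD(1)[OF Q4] A4(1) by (auto simp: diagonal_mat_def)
  then show ?case using orthonormal_mat_mult[OF H B] by blast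
qed

lemma symmetric_mat_char_poly_split:
  fixes M :: "real mat"
  assumes "M \<in> carrier_mat n n" "M\<^sup>T = M"
  shows "\<exists>e. char_poly M = (\<Prod>i<n. [:- e i, 1:])"
proof -
  obtain R where R: "orthonormal_mat n R" and diag: "diagonal_mat (R\<^sup>T * M * R)"
    using symmetric_mat_orthonormal_diagonalization[OF assms] by blast
  have "R\<^sup>T * M * R \<in> carrier_mat n n" using orthonormal_matD[OF R] assms(1) by simp
  then have "char_poly M = (\<Prod>i<n. [:- (R\<^sup>T * M * R) $$ (i,i), 1:])"
    using char_poly_diagonal_mat[OF _ diag] char_poly_orthonormal_congruence[OF R assms(1)] by simp
  then show ?thesis by (intro exI[of _ "\<lambda>i. (R\<^sup>T * M * R) $$ (i,i)"])
qed

lemma psd_mat_orthonormal_diagonalization: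
  assumes "psd_mat n A"
  shows "\<exists>Q. orthonormal_mat n Q \<and> diagonal_mat (Q\<^sup>T * A * Q) \<and> (\<forall>i<n. 0 \<le> (Q\<^sup>T * A * Q) $$ (i,i))"
proof -
  have A: "A \<in> carrier_mat n n" "A\<^sup>T = A" and psd: "\<And>v. v \<in> carrier_vec n \<Longrightarrow> 0 \<le> v \<bullet> (A *\<^sub>v v)"
    using assms unfolding psd_mat_def by auto
  obtain Q where Q: "orthonormal_mat n Q" and diag: "diagonal_mat (Q\<^sup>T * A * Q)"
    using symmetric_mat_orthonormal_diagonalization[OF A] by blast
  note Q' = orthonormal_matD[OF Q]
  have DC: "Q\<^sup>T * A * Q \<in> carrier_mat n n" using Q' A by simp
  have "(Q *\<^sub>v unit_vec n i) \<bullet> (A *\<^sub>v (Q *\<^sub>v unit_vec n i)) = (Q\<^sup>T * A * Q) $$ (i,i)"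
    if i: "i < n" for i
  proof -
    have "(Q *\<^sub>v unit_vec n i) \<bullet> (A *\<^sub>v (Q *\<^sub>v unit_vec n i))
        = unit_vec n i \<bullet> ((Q\<^sup>T * A * Q) *\<^sub>v unit_vec n i)"
      using orthonormal_mat_quadratic_form[OF Q A(1), of "Q *\<^sub>v unit_vec n i"] Q'
        orthonormal_mat_cancel_vec(2)[OF Q unit_vec_carrier] by simp
    also have "\<dots> = ((Q\<^sup>T * A * Q) *\<^sub>v unit_vec n i) $ i"
      by (rule scalar_prod_left_unit) (use DC i in auto)
    also have "\<dots> = (Q\<^sup>T * A * Q) $$ (i,i)"
      unfolding diagonal_mat_mult_vec[OF DC diag unit_vec_carrier i] using i by simp
    finally show ?thesis .
  qed
  then show ?thesis using Q diag psd[OF mult_mat_vec_carrier[OF Q'(1) unit_vec_carrier]] by metis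
qed

section \<open>Characteristic polynomial of a rank-one update\<close>

lemma det_one_minus_outer_prod:
  fixes z :: "real vec"
  assumes z: "z \<in> carrier_vec n"
  shows "det (1\<^sub>m n - outer_prod z) = 1 - z \<bullet> z"
proof (cases "z = 0\<^sub>v n")
  case True
  have "1\<^sub>m n - outer_prod z = 1\<^sub>m n" using True by (intro eq_matI) auto
  then show ?thesis using True by simp
next
  case False
  then have n: "0 < n" using z by (cases n) auto
  obtain H where H: "orthonormal_mat n H" and Hz: "H\<^sup>T *\<^sub>v z = sqrt (z \<bullet> z) \<cdot>\<^sub>v unit_vec n 0"
    using orthonormal_mat_to_axis[OF z n] by blast
  define G where "G = 1\<^sub>m n - outer_prod (sqrt (z \<bullet> z) \<cdot>\<^sub>v unit_vec n 0)"
  have G: "G \<in> carrier_mat n n" "diagonal_mat G" by (auto simp: G_def diagonal_mat_def)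
  have "G = H\<^sup>T * (1\<^sub>m n - outer_prod z) * H"
    using congruence_one_minus_outer_prod[OF orthonormal_matD(1)[OF H] z] orthonormal_matD(3)[OF H]
    by (simp add: Hz G_def)
  then have "det (1\<^sub>m n - outer_prod z) = det G"
    using det_orthonormal_congruence[OF H] z by (simp add: minus_carrier_mat)
  also have "\<dots> = (\<Prod>i<n. if i = 0 then 1 - z \<bullet> z else 1)"
    unfolding det_diagonal_mat[OF G]
    using scalar_prod_self_nonneg[of z] by (intro prod.cong) (auto simp: G_def)
  also have "\<dots> = 1 - z \<bullet> z" using n by (simp add: prod.delta)
  finally show ?thesis .
qed

lemma neg_char_matrix_diagonal_plus_outer_prod:
  fixes D S :: "real mat"
  assumes D: "D \<in> carrier_mat n n" "diagonal_mat D" and S: "S \<in> carrier_mat n n" "diagonal_mat S"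
    and SS: "\<And>i. i < n \<Longrightarrow> S $$ (i,i) * S $$ (i,i) = x - D $$ (i,i)"
    and z: "z \<in> carrier_vec n" and Sz: "S *\<^sub>v z = w"
  shows "- char_matrix (D + outer_prod w) x = S * (1\<^sub>m n - outer_prod z) * S"
proof -
  have ST: "S\<^sup>T = S" by (rule transpose_diagonal_mat[OF S])
  have w: "w \<in> carrier_vec n" using S(1) z Sz by auto
  have "S * S = x \<cdot>\<^sub>m 1\<^sub>m n - D"
  proof (rule eq_matI)
    fix i j assume "i < dim_row (x \<cdot>\<^sub>m 1\<^sub>m n - D)" "j < dim_col (x \<cdot>\<^sub>m 1\<^sub>m n - D)"
    with D have ij: "i < n" "j < n" by auto
    have "row S i = S $$ (i,i) \<cdot>\<^sub>v unit_vec n i"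
      using ij S unfolding diagonal_mat_def by (intro eq_vecI) auto
    then have "(S * S) $$ (i,j) = S $$ (i,i) * S $$ (i,j)"
      using ij S(1) by simp
    then show "(S * S) $$ (i,j) = (x \<cdot>\<^sub>m 1\<^sub>m n - D) $$ (i,j)"
      using ij D S SS by (auto simp: diagonal_mat_def)
  qed (use S D in auto)
  then show ?thesis
    using congruence_one_minus_outer_prod[OF S(1) z] D w unfolding ST Sz
    by (intro eq_matI) (auto simp: char_matrix_def)
qed

(* x 1 - D - w w^T = S (1 - z z^T) S with S = diag (sqrt (x - d_i)) and z = S^-1 w. *)
lemma poly_char_poly_diagonal_plus_outer_prod:
  fixes D :: "real mat"
  assumes D: "D \<in> carrier_mat n n" "diagonal_mat D" and w: "w \<in> carrier_vec n"
    and x: "\<And>i. i < n \<Longrightarrow> D $$ (i,i) < x"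
  shows "poly (char_poly (D + outer_prod w)) x
    = (\<Prod>i<n. x - D $$ (i,i)) * (1 - (\<Sum>i<n. (w $ i)\<^sup>2 / (x - D $$ (i,i))))"
proof -
  define s where "s i = sqrt (x - D $$ (i,i))" for i
  have s: "0 < s i" "s i * s i = x - D $$ (i,i)" if "i < n" for i
    using x[OF that] by (auto simp: s_def)
  define S where "S = mat n n (\<lambda>(i,j). if i = j then s i else 0)"
  have S: "S \<in> carrier_mat n n" "diagonal_mat S" and S_diag: "\<And>i. i < n \<Longrightarrow> S $$ (i,i) = s i"
    by (auto simp: S_def diagonal_mat_def)
  define z where "z = vec n (\<lambda>i. w $ i / s i)"
  have z: "z \<in> carrier_vec n" by (simp add: z_def)
  have F: "1\<^sub>m n - outer_prod z \<in> carrier_mat n n" using z by (simp add: minus_carrier_mat)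
  have "S *\<^sub>v z = w"
    using w S(1) diagonal_mat_mult_vec[OF S z] s(1)
    by (intro eq_vecI) (auto simp: S_diag z_def less_le)
  then have "- char_matrix (D + outer_prod w) x = S * (1\<^sub>m n - outer_prod z) * S"
    using neg_char_matrix_diagonal_plus_outer_prod[OF D S _ z] s(2) by (simp add: S_diag)
  then have "poly (char_poly (D + outer_prod w)) x = det S * det (1\<^sub>m n - outer_prod z) * det S"
    using char_poly_matrix[of "D + outer_prod w" n] D w
      det_mult[OF mult_carrier_mat[OF S(1) F] S(1)] det_mult[OF S(1) F]
    by simp
  also have "\<dots> = (\<Prod>i<n. s i * s i) * (1 - z \<bullet> z)"
    unfolding det_diagonal_mat[OF S] det_one_minus_outer_prod[OF z]
    by (simp add: S_diag prod.distrib)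
  also have "z \<bullet> z = (\<Sum>i<n. (w $ i)\<^sup>2 / (x - D $$ (i,i)))"
    using s by (auto simp: z_def scalar_prod_def lessThan_atLeast0 power2_eq_square intro!: sum.cong)
  finally show ?thesis using s(2) by simp
qed

lemma poly_eqI_greaterThan:
  fixes p q :: "real poly"
  assumes "\<And>x. b < x \<Longrightarrow> poly p x = poly q x"
  shows "p = q"
proof (rule ccontr)
  assume "p \<noteq> q"
  then have "finite {x. poly (p - q) x = 0}" by (intro poly_roots_finite) simp
  moreover have "{b<..} \<subseteq> {x. poly (p - q) x = 0}" using assms by auto
  ultimately show False using infinite_Ioi[of b] finite_subset by blast
qed

lemma char_poly_diagonal_plus_outer_prod:
  fixes D :: "real mat"
  assumes D: "D \<in> carrier_mat n n" "diagonal_mat D" and w: "w \<in> carrier_vec n"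
  shows "char_poly (D + outer_prod w) = (\<Prod>i<n. [:- D $$ (i,i), 1:])
    - (\<Sum>i<n. smult ((w $ i)\<^sup>2) (\<Prod>j\<in>{..<n} - {i}. [:- D $$ (j,j), 1:]))"
proof (rule poly_eqI_greaterThan)
  fix x assume x: "(\<Sum>i<n. \<bar>D $$ (i,i)\<bar>) < x"
  have lt: "D $$ (i,i) < x" if "i < n" for i
    using member_le_sum[of i "{..<n}" "\<lambda>i. \<bar>D $$ (i,i)\<bar>"] that x by auto
  have quot: "(\<Prod>j<n. x - D $$ (j,j)) * (w $ i)\<^sup>2 / (x - D $$ (i,i))
      = (w $ i)\<^sup>2 * (\<Prod>j\<in>{..<n} - {i}. x - D $$ (j,j))" if "i < n" for i
    using lt[OF that] that by (simp add: prod.remove)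
  have "poly (char_poly (D + outer_prod w)) x
      = (\<Prod>i<n. x - D $$ (i,i)) * (1 - (\<Sum>i<n. (w $ i)\<^sup>2 / (x - D $$ (i,i))))"
    by (rule poly_char_poly_diagonal_plus_outer_prod[OF D w lt])
  also have "\<dots> = (\<Prod>i<n. x - D $$ (i,i))
      - (\<Sum>i<n. (w $ i)\<^sup>2 * (\<Prod>j\<in>{..<n} - {i}. x - D $$ (j,j)))"
    unfolding right_diff_distrib sum_distrib_left by (simp add: quot)
  finally show "poly (char_poly (D + outer_prod w)) x = poly ((\<Prod>i<n. [:- D $$ (i,i), 1:])
    - (\<Sum>i<n. smult ((w $ i)\<^sup>2) (\<Prod>j\<in>{..<n} - {i}. [:- D $$ (j,j), 1:]))) x"
    by (simp add: poly_prod poly_sum)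
qed

lemma prod_linear_factors_split_zeros:
  fixes e :: "'b \<Rightarrow> 'a :: comm_ring_1"
  assumes "finite A"
  shows "(\<Prod>j\<in>A. [:- e j, 1:])
    = [:0, 1:] ^ card {j\<in>A. e j = 0} * (\<Prod>j\<in>{j\<in>A. e j \<noteq> 0}. [:- e j, 1:])"
proof -
  have "(\<Prod>j\<in>A. [:- e j, 1:])
      = (\<Prod>j\<in>{j\<in>A. e j = 0} \<union> {j\<in>A. e j \<noteq> 0}. [:- e j, 1:])"
    by (rule prod.cong) auto
  also have "\<dots> = (\<Prod>j\<in>{j\<in>A. e j = 0}. [:- e j, 1:]) * (\<Prod>j\<in>{j\<in>A. e j \<noteq> 0}. [:- e j, 1:])"
    by (rule prod.union_disjoint) (use assms in auto)
  also have "(\<Prod>j\<in>{j\<in>A. e j = 0}. [:- e j, 1:]) = (\<Prod>j\<in>{j\<in>A. e j = 0}. [:0, 1:])"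
    by (rule prod.cong) auto
  finally show ?thesis by simp
qed

lemma secular_poly_factor:
  fixes d a :: "nat \<Rightarrow> real" and n :: nat
  defines "Z \<equiv> {i. i < n \<and> d i = 0}" and "N \<equiv> {i. i < n \<and> d i \<noteq> 0}"
  assumes Z: "Z \<noteq> {}"
  shows "\<exists>h. (\<Prod>i<n. [:- d i, 1:]) - (\<Sum>i<n. smult (a i) (\<Prod>j\<in>{..<n} - {i}. [:- d j, 1:]))
             = [:0, 1:] ^ (card Z - 1) * h
           \<and> poly h 0 = - (\<Sum>i\<in>Z. a i) * (\<Prod>j\<in>N. - d j)"
proof -
  let ?X = "[:0, 1:] :: real poly" and ?L = "\<lambda>j. [:- d j, 1:]"
  define m where "m = card Z"
  define PN where "PN = (\<Prod>j\<in>N. ?L j)"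
  define Q where "Q i = (\<Prod>j\<in>N - {i}. ?L j)" for i
  have fin: "finite Z" "finite N" by (auto simp: Z_def N_def)
  have m: "?X ^ m = ?X ^ (m - 1) * ?X"
    using Z fin(1) by (cases m) (auto simp: m_def)
  have split: "(\<Prod>j\<in>{..<n} - I. ?L j) = ?X ^ card (Z - I) * (\<Prod>j\<in>N - I. ?L j)" for I
  proof -
    have "{j\<in>{..<n} - I. d j = 0} = Z - I" "{j\<in>{..<n} - I. d j \<noteq> 0} = N - I"
      by (auto simp: Z_def N_def)
    then show ?thesis using prod_linear_factors_split_zeros[of "{..<n} - I" d] by simp
  qed
  have full: "(\<Prod>i<n. ?L i) = ?X ^ (m - 1) * (?X * PN)"
    using split[of "{}"] m by (simp add: m_def PN_def)
  have factor_Z: "(\<Prod>j\<in>{..<n} - {i}. ?L j) = ?X ^ (m - 1) * PN" if "i \<in> Z" for i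
  proof -
    have "N - {i} = N" using that by (auto simp: Z_def N_def)
    then show ?thesis using split[of "{i}"] that fin(1) by (simp add: m_def PN_def)
  qed
  have factor_N: "(\<Prod>j\<in>{..<n} - {i}. ?L j) = ?X ^ (m - 1) * (?X * Q i)" if "i \<in> N" for i
  proof -
    have "Z - {i} = Z" using that by (auto simp: Z_def N_def)
    then show ?thesis using split[of "{i}"] m by (simp add: m_def Q_def)
  qed
  have "{..<n} = Z \<union> N" "Z \<inter> N = {}" by (auto simp: Z_def N_def)
  then have "(\<Sum>i<n. smult (a i) (\<Prod>j\<in>{..<n} - {i}. ?L j))
      = (\<Sum>i\<in>Z. smult (a i) (\<Prod>j\<in>{..<n} - {i}. ?L j))
        + (\<Sum>i\<in>N. smult (a i) (\<Prod>j\<in>{..<n} - {i}. ?L j))"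
    using fin by (simp add: sum.union_disjoint)
  also have "\<dots> = ?X ^ (m - 1) * (smult (\<Sum>i\<in>Z. a i) PN + ?X * (\<Sum>i\<in>N. smult (a i) (Q i)))"
    by (simp add: factor_Z factor_N smult_sum sum_distrib_left distrib_left cong: sum.cong)
  finally have "(\<Prod>i<n. ?L i) - (\<Sum>i<n. smult (a i) (\<Prod>j\<in>{..<n} - {i}. ?L j))
      = ?X ^ (m - 1) * (?X * PN - smult (\<Sum>i\<in>Z. a i) PN - ?X * (\<Sum>i\<in>N. smult (a i) (Q i)))"
    unfolding full by (simp add: algebra_simps)
  moreover have "poly (?X * PN - smult (\<Sum>i\<in>Z. a i) PN - ?X * (\<Sum>i\<in>N. smult (a i) (Q i))) 0
      = - (\<Sum>i\<in>Z. a i) * (\<Prod>j\<in>N. - d j)"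
    by (simp add: PN_def poly_prod)
  ultimately show ?thesis unfolding m_def by blast
qed

section \<open>Pseudo-determinant and smallest nonzero eigenvalue\<close>

lemma proots_prod_linear_factors:
  fixes e :: "'b \<Rightarrow> 'a :: idom"
  assumes "finite A"
  shows "proots (\<Prod>i\<in>A. [:- e i, 1:]) = image_mset e (mset_set A)"
  using assms
proof (induction A rule: finite_induct)
  case (insert x A)
  have "(\<Prod>i\<in>A. [:- e i, 1:]) \<noteq> 0" using insert(1) by (simp add: prod_zero_iff)
  then have "proots ([:- e x, 1:] * (\<Prod>i\<in>A. [:- e i, 1:]))
      = proots [:- e x, 1:] + proots (\<Prod>i\<in>A. [:- e i, 1:])"
    by (intro proots_mult) simp
  then show ?case using insert by (simp only: prod.insert) simp
qed simp

(* pdet only sees the real roots, hence the hypothesis that the characteristic polynomial splits. *)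
lemma pdet_char_poly_split:
  fixes n :: nat
  assumes "char_poly M = (\<Prod>i<n. [:- e i, 1:])"
  shows "pdet M = (\<Prod>i\<in>{i. i < n \<and> e i \<noteq> 0}. e i)"
proof -
  have "proots (char_poly M) = image_mset e (mset_set {..<n})"
    unfolding assms by (rule proots_prod_linear_factors) simp
  then have "pdet M = prod_mset (image_mset e (filter_mset (\<lambda>i. e i \<noteq> 0) (mset_set {..<n})))"
    unfolding pdet_def by (simp add: image_mset_filter_mset_swap[symmetric])
  also have "filter_mset (\<lambda>i. e i \<noteq> 0) (mset_set {..<n}) = mset_set {i. i < n \<and> e i \<noteq> 0}"
    by (simp add: conj_commute)
  finally show ?thesis by (simp add: prod_unfold_prod_mset)
qed

lemma order_0_monom_mult:
  fixes h :: "'a :: idom poly"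
  assumes "poly h 0 \<noteq> 0"
  shows "order 0 ([:0, 1:] ^ k * h) = k"
proof -
  have "[:0, 1:] ^ k * h \<noteq> 0" using assms by auto
  then have "order 0 ([:0, 1:] ^ k * h) = order 0 ([:0, 1:] ^ k :: 'a poly) + order 0 h"
    by (rule order_mult)
  then show ?thesis using order_power_n_n[of 0 k] order_0I[OF assms] by simp
qed

lemma pdet_char_poly_factor:
  fixes n k :: nat and h :: "real poly"
  assumes split: "char_poly M = (\<Prod>i<n. [:- e i, 1:])"
    and factor: "char_poly M = [:0, 1:] ^ k * h" and h0: "poly h 0 \<noteq> 0"
  shows "pdet M = (-1) ^ (n - k) * poly h 0"
proof -
  define Z where "Z = {i. i < n \<and> e i = 0}"
  define NE where "NE = {i. i < n \<and> e i \<noteq> 0}"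
  define P where "P = (\<Prod>i\<in>NE. [:- e i, 1:])"
  have split': "char_poly M = [:0, 1:] ^ card Z * P"
    unfolding split P_def Z_def NE_def
    using prod_linear_factors_split_zeros[of "{..<n}" e] by simp
  have P0: "poly P 0 = (-1) ^ card NE * (\<Prod>i\<in>NE. e i)"
    by (simp add: P_def poly_prod prod_uminus)
  then have "poly P 0 \<noteq> 0" by (simp add: NE_def)
  then have "k = card Z"
    using order_0_monom_mult[OF h0, of k] order_0_monom_mult[of P "card Z"] factor split' by simp
  then have "h = P"
    using factor split' by simp
  moreover have "n - k = card NE"
  proof -
    have "card Z + card NE = card (Z \<union> NE)"
      by (rule card_Un_disjoint[symmetric]) (auto simp: Z_def NE_def)
    also have "Z \<union> NE = {..<n}" by (auto simp: Z_def NE_def)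
    finally show ?thesis using \<open>k = card Z\<close> by simp
  qed
  ultimately show ?thesis
    using pdet_char_poly_split[OF split] P0 by (simp add: NE_def flip: power_add)
qed

lemma lambda_min_nz_char_poly:
  assumes "A \<in> carrier_mat n n"
  shows "lambda_min_nz A = Min {x. poly (char_poly A) x = 0 \<and> x \<noteq> 0}"
  unfolding lambda_min_nz_def using eigenvalue_root_char_poly[OF assms] by simp

lemma lambda_min_nz_cong_char_poly:
  assumes "A \<in> carrier_mat n n" "B \<in> carrier_mat n n" "char_poly A = char_poly B"
  shows "lambda_min_nz A = lambda_min_nz B"
  using lambda_min_nz_char_poly[OF assms(1)] lambda_min_nz_char_poly[OF assms(2)] assms(3) by simp

lemma lambda_min_nz_diagonal_mat:
  assumes "D \<in> carrier_mat n n" "diagonal_mat D"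
  shows "lambda_min_nz D = Min {x. (\<exists>k<n. D $$ (k,k) = x) \<and> x \<noteq> 0}"
  unfolding lambda_min_nz_def eigenvalue_diagonal_mat_iff[OF assms] ..

lemma lambda_min_nz_diagonal_rayleigh:
  fixes E :: "real mat"
  assumes E: "E \<in> carrier_mat n n" "diagonal_mat E" and Y: "Y \<in> carrier_vec n"
    and Y0: "\<And>k. k < n \<Longrightarrow> E $$ (k,k) = 0 \<Longrightarrow> Y $ k = 0"
  shows "lambda_min_nz E * (Y \<bullet> Y) \<le> Y \<bullet> (E *\<^sub>v Y)"
proof -
  define S where "S = {x. (\<exists>k<n. E $$ (k,k) = x) \<and> x \<noteq> 0}"
  have "finite S" by (rule finite_subset[of _ "(\<lambda>k. E $$ (k,k)) ` {..<n}"]) (auto simp: S_def)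
  have bound: "Min S * (Y $ k)\<^sup>2 \<le> E $$ (k,k) * (Y $ k)\<^sup>2" if k: "k < n" for k
  proof (cases "E $$ (k,k) = 0")
    case False
    then have "E $$ (k,k) \<in> S" using k by (auto simp: S_def)
    then have "Min S \<le> E $$ (k,k)" using \<open>finite S\<close> by simp
    then show ?thesis by (simp add: mult_right_mono)
  qed (simp add: Y0 k)
  have "lambda_min_nz E * (Y \<bullet> Y) = (\<Sum>k<n. Min S * (Y $ k)\<^sup>2)"
    unfolding lambda_min_nz_diagonal_mat[OF E] S_def[symmetric] using Y
    by (simp add: scalar_prod_def sum_distrib_left lessThan_atLeast0 power2_eq_square)
  also have "\<dots> \<le> (\<Sum>k<n. E $$ (k,k) * (Y $ k)\<^sup>2)"
    using bound by (intro sum_mono) simp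
  also have "\<dots> = Y \<bullet> (E *\<^sub>v Y)"
    using diagonal_mat_quadratic_form[OF E Y] by simp
  finally show ?thesis .
qed

lemma lambda_min_nz_rayleigh:
  fixes M :: "real mat"
  assumes M: "M \<in> carrier_mat n n" "M\<^sup>T = M" and z: "z \<in> carrier_vec n"
    and perp: "\<And>y. y \<in> mat_kernel M \<Longrightarrow> z \<bullet> y = 0"
  shows "lambda_min_nz M * (z \<bullet> z) \<le> z \<bullet> (M *\<^sub>v z)"
proof -
  obtain R where R: "orthonormal_mat n R" and diag: "diagonal_mat (R\<^sup>T * M * R)"
    using symmetric_mat_orthonormal_diagonalization[OF M] by blast
  note R' = orthonormal_matD[OF R]
  define E where "E = R\<^sup>T * M * R"
  define Y where "Y = R\<^sup>T *\<^sub>v z"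
  have E: "E \<in> carrier_mat n n" "diagonal_mat E" using R' M diag by (auto simp: E_def)
  have Y: "Y \<in> carrier_vec n" using R' z by (simp add: Y_def)
  have "Y $ k = 0" if k: "k < n" "E $$ (k,k) = 0" for k
  proof -
    have "R *\<^sub>v unit_vec n k \<in> mat_kernel M"
      using orthonormal_congruence_mult_vec_eq_0[OF R M(1) unit_vec_carrier]
        diagonal_mat_mult_unit_vec_eq_0[OF E k] R' M(1)
      by (intro mat_kernelI[OF M(1)]) (auto simp: E_def)
    then have "z \<bullet> (R *\<^sub>v unit_vec n k) = 0" by (rule perp)
    then show ?thesis
      using transpose_vec_mult_scalar[OF R'(1) unit_vec_carrier[of n k] z] k by (simp add: Y_def)
  qed
  then have "lambda_min_nz E * (Y \<bullet> Y) \<le> Y \<bullet> (E *\<^sub>v Y)"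
    by (rule lambda_min_nz_diagonal_rayleigh[OF E Y])
  moreover have "lambda_min_nz M = lambda_min_nz E"
    using lambda_min_nz_cong_char_poly[OF M(1) E(1)] char_poly_orthonormal_congruence[OF R M(1)]
    by (simp add: E_def)
  ultimately show ?thesis
    using orthonormal_mat_scalar_prod[OF R z z] orthonormal_mat_quadratic_form[OF R M(1) z]
    by (simp add: Y_def E_def)
qed

section \<open>Rank-one updates of nonnegative diagonal matrices\<close>

lemma symmetric_diagonal_plus_outer_prod:
  assumes "D \<in> carrier_mat n n" "diagonal_mat D" "w \<in> carrier_vec n"
  shows "D + outer_prod w \<in> carrier_mat n n" "(D + outer_prod w)\<^sup>T = D + outer_prod w"
  using assms transpose_diagonal_mat[OF assms(1,2)] by (auto simp: transpose_add)

lemma quadratic_form_diagonal_plus_outer_prod: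
  fixes D :: "real mat"
  assumes D: "D \<in> carrier_mat n n" "diagonal_mat D" and w: "w \<in> carrier_vec n"
    and x: "x \<in> carrier_vec n"
  shows "x \<bullet> ((D + outer_prod w) *\<^sub>v x) = (\<Sum>i<n. D $$ (i,i) * (x $ i)\<^sup>2) + (w \<bullet> x)\<^sup>2"
proof -
  have "x \<bullet> ((D + outer_prod w) *\<^sub>v x) = x \<bullet> (D *\<^sub>v x) + (w \<bullet> x) * (x \<bullet> w)"
    using D w x by (simp add: add_mult_distrib_mat_vec[of _ n n] scalar_prod_add_distrib[of _ n]
        outer_prod_mult_vec)
  then show ?thesis
    using diagonal_mat_quadratic_form[OF D x] comm_scalar_prod[OF w x] by (simp add: power2_eq_square)
qed

lemma pdet_diagonal_plus_outer_prod:
  fixes D :: "real mat"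
  assumes D: "D \<in> carrier_mat n n" "diagonal_mat D" and w: "w \<in> carrier_vec n"
  defines "c \<equiv> (\<Sum>i\<in>{i. i < n \<and> D $$ (i,i) = 0}. (w $ i)\<^sup>2)"
  assumes c: "c \<noteq> 0"
  shows "pdet (D + outer_prod w) = c * pdet D"
proof -
  define Z where "Z = {i. i < n \<and> D $$ (i,i) = 0}"
  define N where "N = {i. i < n \<and> D $$ (i,i) \<noteq> 0}"
  have "c = (\<Sum>i\<in>Z. (w $ i)\<^sup>2)" by (simp add: c_def Z_def)
  then have "Z \<noteq> {}" using c by auto
  then obtain h where h: "char_poly (D + outer_prod w) = [:0, 1:] ^ (card Z - 1) * h"
    and h0: "poly h 0 = - c * (\<Prod>j\<in>N. - D $$ (j,j))"
    using secular_poly_factor[of n "\<lambda>i. D $$ (i,i)" "\<lambda>i. (w $ i)\<^sup>2"]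
    unfolding char_poly_diagonal_plus_outer_prod[OF D w] by (auto simp: Z_def N_def c_def)
  have "poly h 0 \<noteq> 0" using c by (simp add: h0 N_def)
  moreover obtain e where "char_poly (D + outer_prod w) = (\<Prod>i<n. [:- e i, 1:])"
    using symmetric_mat_char_poly_split[OF symmetric_diagonal_plus_outer_prod[OF D w]] by blast
  ultimately have "pdet (D + outer_prod w) = (-1) ^ (n - (card Z - 1)) * poly h 0"
    using pdet_char_poly_factor[OF _ h] by blast
  moreover have "n - (card Z - 1) = Suc (card N)"
  proof -
    have "card Z + card N = card (Z \<union> N)"
      by (rule card_Un_disjoint[symmetric]) (auto simp: Z_def N_def)
    also have "Z \<union> N = {..<n}" by (auto simp: Z_def N_def)
    finally show ?thesis using \<open>Z \<noteq> {}\<close> card_gt_0_iff[of Z] by (simp add: Z_def)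
  qed
  moreover have "pdet D = (\<Prod>j\<in>N. D $$ (j,j))"
    using pdet_char_poly_split[OF char_poly_diagonal_mat[OF D]] by (simp add: N_def)
  ultimately show ?thesis by (simp add: h0 prod_uminus flip: power_add)
qed

lemma kernel_diagonal_plus_outer_prod:
  fixes D :: "real mat"
  assumes D: "D \<in> carrier_mat n n" "diagonal_mat D" and nonneg: "\<And>i. i < n \<Longrightarrow> 0 \<le> D $$ (i,i)"
    and w: "w \<in> carrier_vec n" and y: "y \<in> mat_kernel (D + outer_prod w)"
  shows "w \<bullet> y = 0" "\<And>i. i < n \<Longrightarrow> D $$ (i,i) \<noteq> 0 \<Longrightarrow> y $ i = 0"
proof -
  have y': "y \<in> carrier_vec n" "(D + outer_prod w) *\<^sub>v y = 0\<^sub>v n"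
    using mat_kernelD[OF symmetric_diagonal_plus_outer_prod(1)[OF D w] y] by auto
  have "(\<Sum>i<n. D $$ (i,i) * (y $ i)\<^sup>2) + (w \<bullet> y)\<^sup>2 = 0"
    using quadratic_form_diagonal_plus_outer_prod[OF D w y'(1)] y' by simp
  moreover have "0 \<le> (\<Sum>i<n. D $$ (i,i) * (y $ i)\<^sup>2)"
    using nonneg by (intro sum_nonneg) simp
  ultimately have wy: "w \<bullet> y = 0" and sum0: "(\<Sum>i<n. D $$ (i,i) * (y $ i)\<^sup>2) = 0"
    by (smt (verit) zero_le_power2 power_eq_0_iff)+
  show "w \<bullet> y = 0" by (rule wy)
  show "y $ i = 0" if "i < n" "D $$ (i,i) \<noteq> 0" for i
    using nonneg that sum0 sum_nonneg_eq_0_iff[of "{..<n}" "\<lambda>i. D $$ (i,i) * (y $ i)\<^sup>2"] by auto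
qed

(* The component z of w in Ker D is orthogonal to Ker (D + w w^T), which needs D >= 0,
   and has Rayleigh quotient c. *)
lemma lambda_min_nz_diagonal_plus_outer_prod_le:
  fixes D :: "real mat"
  assumes D: "D \<in> carrier_mat n n" "diagonal_mat D" and nonneg: "\<And>i. i < n \<Longrightarrow> 0 \<le> D $$ (i,i)"
    and w: "w \<in> carrier_vec n"
  defines "c \<equiv> (\<Sum>i\<in>{i. i < n \<and> D $$ (i,i) = 0}. (w $ i)\<^sup>2)"
  assumes c: "0 < c"
  shows "lambda_min_nz (D + outer_prod w) \<le> c"
proof -
  define z where "z = vec n (\<lambda>i. if D $$ (i,i) = 0 then w $ i else 0)"
  have z: "z \<in> carrier_vec n" by (simp add: z_def)
  have z_sums: "z \<bullet> x = (\<Sum>i\<in>{i. i < n \<and> D $$ (i,i) = 0}. w $ i * x $ i)" if "x \<in> carrier_vec n" for x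
  proof -
    have "z \<bullet> x = (\<Sum>i<n. if D $$ (i,i) = 0 then w $ i * x $ i else 0)"
      using that by (auto simp: z_def scalar_prod_def lessThan_atLeast0 intro!: sum.cong)
    also have "\<dots> = (\<Sum>i\<in>{i\<in>{..<n}. D $$ (i,i) = 0}. w $ i * x $ i)"
      by (rule sum.inter_filter[symmetric]) simp
    finally show ?thesis by simp
  qed
  have zz: "z \<bullet> z = c" "w \<bullet> z = c"
    using z_sums[OF z] z_sums[OF w] comm_scalar_prod[OF w z] w
    by (auto simp: c_def z_def power2_eq_square intro!: sum.cong)
  have "z \<bullet> y = 0" if y: "y \<in> mat_kernel (D + outer_prod w)" for y
  proof -
    note ker = kernel_diagonal_plus_outer_prod[OF D nonneg w y]
    have "y \<in> carrier_vec n"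
      using mat_kernelD(1)[OF symmetric_diagonal_plus_outer_prod(1)[OF D w] y] .
    then have "z \<bullet> y = w \<bullet> y"
      using w ker(2) by (auto simp: z_def scalar_prod_def intro!: sum.cong)
    then show ?thesis using ker(1) by simp
  qed
  then have "lambda_min_nz (D + outer_prod w) * c \<le> c * c"
    using lambda_min_nz_rayleigh[OF symmetric_diagonal_plus_outer_prod[OF D w] z]
      quadratic_form_diagonal_plus_outer_prod[OF D w z] zz
    by (simp add: z_def power2_eq_square)
  then show ?thesis using c by simp
qed

lemma pdet_diagonal_plus_outer_prod_ge:
  fixes D :: "real mat"
  assumes D: "D \<in> carrier_mat n n" "diagonal_mat D" and nonneg: "\<And>i. i < n \<Longrightarrow> 0 \<le> D $$ (i,i)"
    and w: "w \<in> carrier_vec n"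
    and c: "0 < (\<Sum>i\<in>{i. i < n \<and> D $$ (i,i) = 0}. (w $ i)\<^sup>2)"
  shows "lambda_min_nz (D + outer_prod w) * pdet D \<le> pdet (D + outer_prod w)"
proof -
  have "0 \<le> pdet D"
    using pdet_char_poly_split[OF char_poly_diagonal_mat[OF D]] nonneg by (auto intro!: prod_nonneg)
  then show ?thesis
    using lambda_min_nz_diagonal_plus_outer_prod_le[OF D nonneg w c] pdet_diagonal_plus_outer_prod[OF D w]
      c mult_right_mono by fastforce
qed

lemma diagonal_mat_kernel_weight_pos:
  fixes D :: "real mat"
  assumes D: "D \<in> carrier_mat n n" "diagonal_mat D" and w: "w \<in> carrier_vec n"
    and y: "y \<in> mat_kernel D" and wy: "w \<bullet> y \<noteq> 0"
  shows "0 < (\<Sum>i\<in>{i. i < n \<and> D $$ (i,i) = 0}. (w $ i)\<^sup>2)"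
proof -
  note y' = mat_kernelD[OF D(1) y]
  have "(\<Sum>i\<in>{0..<n}. w $ i * y $ i) \<noteq> 0" using wy y'(1) by (simp add: scalar_prod_def)
  then obtain i where i: "i < n" "w $ i * y $ i \<noteq> 0"
    by (meson atLeastLessThan_iff sum.neutral)
  have "D $$ (i,i) * y $ i = 0"
    using arg_cong[OF y'(2), of "\<lambda>v. v $ i"] diagonal_mat_mult_vec[OF D y'(1) i(1)] i(1) by simp
  then have "D $$ (i,i) = 0" "w $ i \<noteq> 0" using i(2) by auto
  then show ?thesis using i(1) by (intro sum_pos2[of _ i]) auto
qed

theorem mainTheorem7:
  fixes n :: nat and A :: "real mat" and u :: "real vec"
  assumes "psd_mat n A"
    and "u \<in> carrier_vec n"
    and "\<exists>y \<in> mat_kernel A. u \<bullet> y \<noteq> 0"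
  shows "pdet (A + outer_prod u) \<ge> lambda_min_nz (A + outer_prod u) * pdet A"
proof -
  obtain Q where Q: "orthonormal_mat n Q" and diag: "diagonal_mat (Q\<^sup>T * A * Q)"
    and nonneg: "\<forall>i<n. 0 \<le> (Q\<^sup>T * A * Q) $$ (i,i)"
    using psd_mat_orthonormal_diagonalization[OF assms(1)] by blast
  define D where "D = Q\<^sup>T * A * Q"
  define w where "w = Q\<^sup>T *\<^sub>v u"
  have A: "A \<in> carrier_mat n n" using assms(1) by (simp add: psd_mat_def)
  have D: "D \<in> carrier_mat n n" "diagonal_mat D" and w: "w \<in> carrier_vec n"
    using orthonormal_matD[OF Q] A diag assms(2) by (auto simp: D_def w_def)
  obtain y where y: "y \<in> mat_kernel A" "u \<bullet> y \<noteq> 0" using assms(3) by blast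
  then have "0 < (\<Sum>i\<in>{i. i < n \<and> D $$ (i,i) = 0}. (w $ i)\<^sup>2)"
    using diagonal_mat_kernel_weight_pos[OF D w orthonormal_congruence_kernel[OF Q A y(1), folded D_def]]
      orthonormal_mat_scalar_prod[OF Q assms(2) mat_kernelD(1)[OF A y(1)]] by (simp add: w_def)
  then have "lambda_min_nz (D + outer_prod w) * pdet D \<le> pdet (D + outer_prod w)"
    using pdet_diagonal_plus_outer_prod_ge[OF D _ w] nonneg by (simp add: D_def)
  moreover have "char_poly (A + outer_prod u) = char_poly (D + outer_prod w)"
    using char_poly_orthonormal_congruence[OF Q, of "A + outer_prod u"] A assms(2)
      congruence_plus_outer_prod[OF orthonormal_matD(1)[OF Q] A assms(2)] by (simp add: D_def w_def)
  moreover have "char_poly A = char_poly D"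
    using char_poly_orthonormal_congruence[OF Q A] by (simp add: D_def)
  ultimately show ?thesis
    using lambda_min_nz_cong_char_poly[of "A + outer_prod u" n "D + outer_prod w"] A assms(2) D w
    by (simp add: pdet_def)
qed

end
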